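(* Let $d\in\{1,2\}$. Identify $\mathbb{R}^2$ with $\mathbb{C}$ in the usual way, so that a map $z\mapsto \rho\,O(z)$ with $\rho>1$ real and $O$ a rotation is multiplication by a complex number $\mu$ with $|\mu|=\rho$ (for $d=1$, $\mu=\pm\rho\in\mathbb{R}$). Let $\Lambda\subset\mathbb{R}^d$ be a lattice, and suppose $\mu\in\Lambda$ with $|\mu|>1$ satisfies $\mu\Lambda\subset\Lambda$. Then there exists an inflationary tessellation of $\mathbb{R}^d$ with multiplier $\mu$.
   Context: Let $m$ denote Lebesgue measure on $\mathbb{R}^d$. Two measurable sets are essentially disjoint if their intersection has measure $0$. A tile is a measurable subset of $\mathbb{R}^d$ of positive measure. Tiles are grouped into finitely many types (equivalence classes), e.g. two tiles have the same type if one is a translate of the other. A tessellation (tiling) of $\mathbb{R}^d$ is a finite collection of types together with a covering of $\mathbb{R}^d$ by pairwise essentially disjoint tiles, each belonging to one of the types. With representatives $R_1,\dots,R_N$ of the types, the tessellation is inflationary with multiplier $\rho O$ ($\rho>1$ real, $O$ orthogonal) if each set $\rho\,O(R_i)$ is a union of essentially disjoint tiles of the given types. A lattice in $\mathbb{R}^d$ is a discrete additive subgroup of rank $d$. *)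

theory Defs
  imports "HOL-Analysis.Analysis"
begin

definition lattice :: "'a::euclidean_space set \<Rightarrow> bool" where
  "lattice L \<longleftrightarrow> 0 \<in> L \<and> (\<forall>x\<in>L. \<forall>y\<in>L. x - y \<in> L) \<and> discrete L \<and> dim L = DIM('a)"

definition ess_disjoint :: "'a::euclidean_space set \<Rightarrow> 'a set \<Rightarrow> bool" where
  "ess_disjoint A B \<longleftrightarrow> A \<inter> B \<in> null_sets lebesgue"

definition is_tile :: "'a::euclidean_space set \<Rightarrow> bool" where
  "is_tile A \<longleftrightarrow> A \<in> sets lebesgue \<and> emeasure lebesgue A > 0 \<and> bounded A"

definition of_type :: "(nat \<Rightarrow> 'a::euclidean_space set) \<Rightarrow> nat \<Rightarrow> 'a set \<Rightarrow> bool" where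
  "of_type R N t \<longleftrightarrow> (\<exists>i<N. \<exists>v. t = (\<lambda>x. v + x) ` R i)"

definition tessellation :: "(nat \<Rightarrow> 'a::euclidean_space set) \<Rightarrow> nat \<Rightarrow> 'a set set \<Rightarrow> bool" where
  "tessellation R N T \<longleftrightarrow> (\<forall>i<N. is_tile (R i)) \<and> (\<forall>t\<in>T. of_type R N t)
     \<and> pairwise ess_disjoint T \<and> \<Union>T = UNIV"

definition inflationary_tessellation ::
  "('a::euclidean_space \<Rightarrow> 'a) \<Rightarrow> (nat \<Rightarrow> 'a set) \<Rightarrow> nat \<Rightarrow> 'a set set \<Rightarrow> bool" where
  "inflationary_tessellation f R N T \<longleftrightarrow> tessellation R N T \<and>
     (\<forall>i<N. \<exists>S. (\<forall>s\<in>S. of_type R N s) \<and> pairwise ess_disjoint S \<and> \<Union>S = f ` R i)"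

end

theory Submission
  imports Defs
begin

text \<open>If \<open>\<mu>\<Lambda> \<subseteq> \<Lambda>\<close>, then \<open>\<mu>\<close> is a rational integer or an imaginary quadratic integer. On the
  line, \<open>\<mu> \<in> \<int>\<close> and unit intervals already form an inflationary tiling. In the plane there is a
  lattice \<open>\<Lambda>'\<close> (\<open>\<int>[i]\<close> or \<open>\<int> + \<int>\<mu>\<close>) and a set \<open>D\<close> of at most \<open>|\<mu>|\<^sup>2\<close> digits with
  \<open>\<Lambda>' = D + \<mu>\<Lambda>'\<close>. The attractor \<open>K = {\<Sum>i\<ge>1. d\<^sub>i \<mu>\<^sup>-\<^sup>i}\<close> then satisfies \<open>\<mu>K = D + K\<close>,
  its \<open>\<Lambda>'\<close>-translates cover the plane, so \<open>K\<close> has interior points by Baire's theorem, and since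
  \<open>\<mu>K\<close> has measure \<open>|\<mu>|\<^sup>2 m(K)\<close> the \<open>|D|\<close> translates making up \<open>\<mu>K\<close> overlap only in measure zero.
  Recentring a power \<open>\<mu>\<^sup>kK = E + K\<close> at a fixed point inside \<open>K\<close>, the nested patches
  \<open>\<mu>\<^sup>k\<^sup>jK\<close> exhaust the plane and give a tiling by translates of the single tile \<open>K\<close>.\<close>

lemma lattice_uminus: "lattice L \<Longrightarrow> x \<in> L \<Longrightarrow> - x \<in> L"
  unfolding lattice_def by (metis diff_0)

lemma lattice_diff: "lattice L \<Longrightarrow> x \<in> L \<Longrightarrow> y \<in> L \<Longrightarrow> x - y \<in> L"
  unfolding lattice_def by blast

lemma lattice_add: "lattice L \<Longrightarrow> x \<in> L \<Longrightarrow> y \<in> L \<Longrightarrow> x + y \<in> L"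
  using lattice_diff[of L x "- y"] lattice_uminus[of L y] by simp

lemma lattice_of_nat_scaleR: "lattice L \<Longrightarrow> x \<in> L \<Longrightarrow> of_nat n *\<^sub>R x \<in> L"
  by (induction n) (auto simp: lattice_def algebra_simps intro: lattice_add)

lemma lattice_of_int_scaleR: "lattice L \<Longrightarrow> x \<in> L \<Longrightarrow> of_int n *\<^sub>R x \<in> L"
  using lattice_of_nat_scaleR[of L x "nat \<bar>n\<bar>"] lattice_uminus[of L "of_nat (nat \<bar>n\<bar>) *\<^sub>R x"]
  by (cases "n \<ge> 0") auto

lemma lattice_uniform_discrete:
  assumes "lattice L"
  shows "uniform_discrete L"
proof -
  have "0 isolated_in L" using assms by (auto simp: lattice_def discrete_def)
  then obtain e where e: "e > 0" "\<And>y. y \<in> L \<Longrightarrow> dist 0 y < e \<Longrightarrow> y = 0"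
    using isolated_inE_dist by metis
  show ?thesis
  proof (rule uniformI2[OF e(1)])
    fix x y assume "x \<in> L" "y \<in> L" "x \<noteq> y"
    then have "x - y \<in> L" "x - y \<noteq> 0" using lattice_diff[OF assms] by auto
    then show "e \<le> dist x y" using e(2)[of "x - y"] by (metis dist_0_norm dist_norm not_less)
  qed
qed

lemma lattice_has_min_norm:
  fixes L :: "'a::euclidean_space set"
  assumes "lattice L" "S \<subseteq> L" "s0 \<in> S"
  shows "\<exists>w\<in>S. \<forall>s\<in>S. norm w \<le> norm s"
proof -
  define F where "F = S \<inter> cball 0 (norm s0)"
  have "uniform_discrete F"
    using lattice_uniform_discrete[OF assms(1)] assms(2) by (auto simp: F_def)
  then have "finite F"
    using uniform_discrete_finite_iff[of F] by (simp add: F_def bounded_Int)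
  moreover have "s0 \<in> F" using assms(3) by (simp add: F_def)
  ultimately obtain w where w: "w \<in> F" "\<And>s. s \<in> F \<Longrightarrow> norm w \<le> norm s"
    using arg_min_if_finite[of F norm] by (metis empty_iff not_le)
  have "norm w \<le> norm s0" using w(2) \<open>s0 \<in> F\<close> .
  then have "norm w \<le> norm s" if "s \<in> S" for s
    using that w(2)[of s] by (cases "s \<in> F") (auto simp: F_def)
  then show ?thesis using w(1) by (auto simp: F_def)
qed

lemma lattice_nonzero:
  fixes L :: "'a::euclidean_space set"
  assumes "lattice L"
  obtains x where "x \<in> L" "x \<noteq> 0"
proof -
  have "\<not> L \<subseteq> {0}"
  proof
    assume "L \<subseteq> {0}"
    then have "dim L = 0" by simp
    moreover have "dim L = DIM('a)" using assms by (simp add: lattice_def)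
    ultimately show False using DIM_positive[where 'a='a] by linarith
  qed
  then show ?thesis using that by blast
qed


subsection \<open>Essential disjointness by counting measure\<close>

lemma pairwise_ess_disjoint_if_measure_Union_ge:
  fixes S :: "'a::euclidean_space set set"
  assumes fin: "finite S"
    and meas: "\<And>A. A \<in> S \<Longrightarrow> A \<in> lmeasurable \<and> measure lebesgue A = c"
    and big: "real (card S) * c \<le> measure lebesgue (\<Union>S)"
  shows "pairwise ess_disjoint S"
proof (rule pairwiseI, rule ccontr)
  fix A B assume AS: "A \<in> S" and BS: "B \<in> S" and AB: "A \<noteq> B" and "\<not> ess_disjoint A B"
  have Am: "A \<in> lmeasurable" and Bm: "B \<in> lmeasurable" using meas AS BS by auto
  have pos: "measure lebesgue (A \<inter> B) > 0"
  proof (rule ccontr)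
    assume "\<not> ?thesis"
    then have "measure lebesgue (A \<inter> B) = 0" using measure_nonneg[of lebesgue "A \<inter> B"] by linarith
    moreover have "A \<inter> B \<in> lmeasurable" using Am Bm by auto
    ultimately have "emeasure lebesgue (A \<inter> B) = 0" by (simp add: emeasure_eq_measure2)
    then show False using \<open>\<not> ess_disjoint A B\<close> Am Bm by (auto simp: ess_disjoint_def intro: null_setsI)
  qed
  define R where "R = S - {A, B}"
  have cardR: "card R = card S - 2"
    using AS BS AB fin by (simp add: R_def card_Diff_subset)
  have "card {A, B} \<le> card S" using AS BS fin by (intro card_mono) auto
  then have c2: "card S \<ge> 2" using AB by simp
  have Rm: "\<Union>R \<in> sets lebesgue" using fin meas by (auto simp: R_def)
  have "\<Union>S = (A \<union> B) \<union> \<Union>R" using AS BS by (auto simp: R_def)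
  then have "measure lebesgue (\<Union>S) \<le> measure lebesgue (A \<union> B) + measure lebesgue (\<Union>R)"
    using Am Bm Rm by (simp add: measure_Un_le)
  also have "measure lebesgue (A \<union> B) = 2 * c - measure lebesgue (A \<inter> B)"
    using measure_Un3[OF Am Bm] meas AS BS by simp
  also have "measure lebesgue (\<Union>R) \<le> (\<Sum>X\<in>R. measure lebesgue X)"
    using fin meas by (intro measure_Union_le) (auto simp: R_def)
  also have "(\<Sum>X\<in>R. measure lebesgue X) = real (card R) * c"
    using meas by (simp add: R_def)
  finally have "measure lebesgue (\<Union>S) < real (card S) * c"
    using pos cardR c2 by (simp add: of_nat_diff algebra_simps)
  with big show False by simp
qed

subsection \<open>Lebesgue measure under complex multiplication\<close>

definition vec_of_complex :: "complex \<Rightarrow> real^2" where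
  "vec_of_complex z = vector [Re z, Im z]"

definition complex_of_vec :: "real^2 \<Rightarrow> complex" where
  "complex_of_vec v = Complex (v$1) (v$2)"

lemma complex_of_vec_of_complex [simp]: "complex_of_vec (vec_of_complex z) = z"
  by (simp add: vec_of_complex_def complex_of_vec_def)

lemma vec_of_complex_of_vec [simp]: "vec_of_complex (complex_of_vec v) = v"
  by (simp add: vec_of_complex_def complex_of_vec_def vec_eq_iff forall_2)

lemma linear_vec_of_complex: "linear vec_of_complex"
  by (rule linearI) (auto simp: vec_of_complex_def vec_eq_iff forall_2)

lemma linear_complex_of_vec: "linear complex_of_vec"
  by (rule linearI) (auto simp: complex_of_vec_def complex_eq_iff)

lemma complex_of_vec_measurable [measurable]: "complex_of_vec \<in> borel_measurable borel"
  unfolding complex_of_vec_def Complex_eq by measurable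

lemma lborel_complex_eq_distr: "(lborel :: complex measure) = distr lborel borel complex_of_vec"
proof (rule lborel_eqI)
  have Basis_2: "(Basis :: (real^2) set) = {axis 1 1, axis 2 1}"
    by (auto simp: Basis_vec_def UNIV_2)
  have prod_Basis_2: "(\<Prod>b\<in>Basis. (v::real^2) \<bullet> b) = v$1 * v$2" for v
    by (simp add: Basis_2 inner_axis axis_eq_axis)
  fix l u :: complex assume le: "\<And>b. b \<in> Basis \<Longrightarrow> l \<bullet> b \<le> u \<bullet> b"
  have "complex_of_vec -` box l u = box (vec_of_complex l) (vec_of_complex u)"
    by (auto simp: mem_box_cart mem_box vec_of_complex_def complex_of_vec_def Basis_complex_def forall_2)
  moreover have "\<forall>b\<in>Basis. vec_of_complex l \<bullet> b \<le> vec_of_complex u \<bullet> b"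
    using le[of 1] le[of "\<i>"] by (auto simp: Basis_2 inner_axis vec_of_complex_def Basis_complex_def)
  ultimately show "emeasure (distr lborel borel complex_of_vec) (box l u) = (\<Prod>b\<in>Basis. (u - l) \<bullet> b)"
    by (simp add: emeasure_distr emeasure_lborel_box_eq prod_Basis_2 Basis_complex_def vec_of_complex_def)
qed simp

lemma measure_vec_of_complex_image:
  assumes "compact S"
  shows "measure lebesgue (vec_of_complex ` S) = measure lebesgue S"
proof -
  have "compact (vec_of_complex ` S)"
    using assms linear_vec_of_complex
    by (intro compact_continuous_image linear_continuous_on) (simp add: linear_conv_bounded_linear)
  moreover have "complex_of_vec -` S = vec_of_complex ` S"
    by (auto simp: image_iff) (metis vec_of_complex_of_vec)
  moreover have "emeasure lborel S = emeasure lborel (vec_of_complex ` S)"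
    using \<open>complex_of_vec -` S = vec_of_complex ` S\<close> assms
    by (subst lborel_complex_eq_distr) (simp add: emeasure_distr compact_imp_closed borel_closed)
  ultimately show ?thesis
    using assms by (simp add: measure_def compact_imp_closed borel_closed)
qed

lemma measure_mult_image_complex:
  fixes S :: "complex set"
  assumes "compact S"
  shows "measure lebesgue ((*) c ` S) = (cmod c)^2 * measure lebesgue S"
proof -
  define g where "g = vec_of_complex \<circ> (*) c \<circ> complex_of_vec"
  have lg: "linear g" unfolding g_def
    by (intro linear_compose linear_vec_of_complex linear_complex_of_vec)
       (simp add: bounded_linear.linear[OF bounded_linear_mult_right])
  have "compact (vec_of_complex ` S)"
    using assms linear_vec_of_complex
    by (intro compact_continuous_image linear_continuous_on) (simp add: linear_conv_bounded_linear)
  moreover have "vec_of_complex ` ((*) c ` S) = g ` (vec_of_complex ` S)"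
    by (auto simp: g_def image_iff)
  moreover have "det (matrix g) = (cmod c)^2"
    by (simp add: det_2 matrix_def g_def complex_of_vec_def vec_of_complex_def axis_def cmod_power2)
       (simp add: power2_eq_square)
  ultimately show ?thesis
    using assms lg
    by (simp add: measure_vec_of_complex_image[symmetric] compact_continuous_image continuous_intros
        measure_linear_image lmeasurable_compact)
qed

lemma mult_image_translate: "(*) c ` ((+) e ` X) = (+) (c * e) ` ((*) (c::'a::semiring) ` X)"
  by (auto simp: image_iff distrib_left)

primrec radix_sums :: "'a::ring_1 \<Rightarrow> 'a set \<Rightarrow> nat \<Rightarrow> 'a set" where
  "radix_sums A E 0 = {0}"
| "radix_sums A E (Suc j) = (\<lambda>(e, d). e + A * d) ` (E \<times> radix_sums A E j)"

lemma finite_radix_sums: "finite E \<Longrightarrow> finite (radix_sums A E j)"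
  by (induction j) auto

lemma card_radix_sums_le: "finite E \<Longrightarrow> card (radix_sums A E j) \<le> card E ^ j"
proof (induction j)
  case (Suc j)
  have "card (radix_sums A E (Suc j)) \<le> card (E \<times> radix_sums A E j)"
    unfolding radix_sums.simps by (rule card_image_le) (simp add: Suc.prems finite_radix_sums)
  also have "\<dots> \<le> card E * card E ^ j" using Suc by (simp add: card_cartesian_product)
  finally show ?case by simp
qed simp

lemma radix_sums_mono:
  assumes "0 \<in> E" "i \<le> j"
  shows "radix_sums A E i \<subseteq> radix_sums A E j"
proof -
  have "radix_sums A E j \<subseteq> radix_sums A E (Suc j)" for j
    using assms(1) by (induction j) (force simp: image_iff)+
  then show ?thesis using lift_Suc_mono_le[of "radix_sums A E"] assms(2) by blast
qed

lemma mult_power_image_eq_radix_sums: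
  assumes patch: "(*) A ` K = (\<Union>e\<in>E. (+) e ` K)"
  shows "(*) (A^j) ` K = (\<Union>d\<in>radix_sums A E j. (+) d ` K)"
proof (induction j)
  case (Suc j)
  have "(*) (A^Suc j) ` K = (*) A ` ((*) (A^j) ` K)"
    by (simp add: image_image mult.assoc)
  also have "\<dots> = (\<Union>d\<in>radix_sums A E j. (+) (A * d) ` ((*) A ` K))"
    by (simp add: Suc image_UN mult_image_translate)
  also have "\<dots> = (\<Union>d\<in>radix_sums A E j. \<Union>e\<in>E. (+) (A * d + e) ` K)"
    by (simp add: patch image_UN image_image add.assoc)
  also have "\<dots> = (\<Union>d\<in>radix_sums A E (Suc j). (+) d ` K)"
    by (auto simp: add.commute)
  finally show ?case .
qed simp

subsection \<open>The self-similar attractor of a digit set\<close>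

lemma closure_UN_finite:
  fixes f :: "'b \<Rightarrow> 'a::topological_space set"
  shows "finite A \<Longrightarrow> closure (\<Union>x\<in>A. f x) = (\<Union>x\<in>A. closure (f x))"
  by (induction A rule: finite_induct) auto

inductive_set expansions :: "complex \<Rightarrow> complex set \<Rightarrow> complex set" for \<mu> D where
  zero: "0 \<in> expansions \<mu> D"
| step: "x \<in> expansions \<mu> D \<Longrightarrow> d \<in> D \<Longrightarrow> (d + x) / \<mu> \<in> expansions \<mu> D"

definition attractor :: "complex \<Rightarrow> complex set \<Rightarrow> complex set" where
  "attractor \<mu> D = closure (expansions \<mu> D)"

lemma expansions_subset_cball:
  assumes "cmod \<mu> > 1" "finite D"
  shows "expansions \<mu> D \<subseteq> cball 0 ((\<Sum>d\<in>D. cmod d) / (cmod \<mu> - 1))"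
proof
  fix x assume "x \<in> expansions \<mu> D"
  then show "x \<in> cball 0 ((\<Sum>d\<in>D. cmod d) / (cmod \<mu> - 1))"
  proof induction
    case zero then show ?case using assms by (simp add: sum_nonneg)
  next
    case (step x d)
    define B where "B = (\<Sum>d\<in>D. cmod d) / (cmod \<mu> - 1)"
    have "cmod d \<le> (\<Sum>d\<in>D. cmod d)"
      using assms(2) step by (intro member_le_sum) auto
    moreover have "cmod x \<le> B" using step.IH by (simp add: B_def)
    moreover have "B * cmod \<mu> = (\<Sum>d\<in>D. cmod d) + B" using assms(1) by (simp add: B_def field_simps)
    ultimately have "cmod (d + x) \<le> B * cmod \<mu>"
      using norm_triangle_ineq[of d x] by linarith
    then have "cmod (d + x) / cmod \<mu> \<le> B" using assms(1) by (subst pos_divide_le_eq) auto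
    then show ?case by (simp add: B_def norm_divide)
  qed
qed

lemma attractor_subset_cball:
  assumes "cmod \<mu> > 1" "finite D"
  shows "attractor \<mu> D \<subseteq> cball 0 ((\<Sum>d\<in>D. cmod d) / (cmod \<mu> - 1))"
  unfolding attractor_def using expansions_subset_cball[OF assms] by (simp add: closure_minimal)

lemma compact_attractor:
  assumes "cmod \<mu> > 1" "finite D"
  shows "compact (attractor \<mu> D)"
  unfolding attractor_def compact_closure
  using expansions_subset_cball[OF assms] bounded_cball bounded_subset by blast

lemma mult_image_expansions:
  assumes "\<mu> \<noteq> 0" "0 \<in> D"
  shows "(*) \<mu> ` expansions \<mu> D = (\<Union>d\<in>D. (+) d ` expansions \<mu> D)"
proof (intro equalityI subsetI)
  fix y assume "y \<in> (*) \<mu> ` expansions \<mu> D"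
  then obtain x where x: "x \<in> expansions \<mu> D" "y = \<mu> * x" by auto
  from x(1) show "y \<in> (\<Union>d\<in>D. (+) d ` expansions \<mu> D)"
  proof cases
    case zero
    then show ?thesis using x assms by (auto intro!: bexI[of _ 0] image_eqI[of _ _ 0] expansions.zero)
  next
    case (step x' d)
    then show ?thesis using x assms by (auto intro!: bexI[of _ d] image_eqI[of _ _ x'])
  qed
next
  fix y assume "y \<in> (\<Union>d\<in>D. (+) d ` expansions \<mu> D)"
  then obtain d x where "d \<in> D" "x \<in> expansions \<mu> D" "y = d + x" by auto
  then show "y \<in> (*) \<mu> ` expansions \<mu> D"
    using assms by (auto intro!: image_eqI[of _ _ "(d + x) / \<mu>"] expansions.step)
qed

lemma mult_image_attractor:
  assumes "\<mu> \<noteq> 0" "0 \<in> D" "finite D"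
  shows "(*) \<mu> ` attractor \<mu> D = (\<Union>d\<in>D. (+) d ` attractor \<mu> D)"
proof -
  have "(*) \<mu> ` attractor \<mu> D = closure ((*) \<mu> ` expansions \<mu> D)"
    unfolding attractor_def using assms(1)
    by (intro closure_injective_linear_image) (auto simp: inj_def bounded_linear.linear[OF bounded_linear_mult_right])
  also have "\<dots> = (\<Union>d\<in>D. closure ((+) d ` expansions \<mu> D))"
    using assms by (simp add: mult_image_expansions closure_UN_finite)
  also have "\<dots> = (\<Union>d\<in>D. (+) d ` attractor \<mu> D)"
    by (simp add: closure_translation attractor_def)
  finally show ?thesis .
qed

text \<open>\<open>Im (cnj w\<^sub>1 * w\<^sub>2) \<noteq> 0\<close> says that \<open>w\<^sub>1, w\<^sub>2\<close> are linearly independent over \<open>\<real>\<close>.\<close>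

definition int_lattice :: "complex \<Rightarrow> complex \<Rightarrow> complex set" where
  "int_lattice w1 w2 = {of_int a * w1 + of_int b * w2 | a b. True}"

lemma complex_eq_real_combination:
  assumes "Im (cnj w1 * w2) \<noteq> 0"
  shows "z = of_real ((Re z * Im w2 - Im z * Re w2) / Im (cnj w1 * w2)) * w1
           + of_real ((Re w1 * Im z - Im w1 * Re z) / Im (cnj w1 * w2)) * w2"
proof -
  define \<Delta> where "\<Delta> = Re w1 * Im w2 - Im w1 * Re w2"
  have "Im (cnj w1 * w2) = \<Delta>" by (simp add: \<Delta>_def algebra_simps)
  moreover have "\<Delta> \<noteq> 0" using assms calculation by simp
  ultimately show ?thesis
    by (simp add: complex_eq_iff field_simps) (simp add: \<Delta>_def algebra_simps)
qed

lemma countable_int_lattice: "countable (int_lattice w1 w2)"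
proof -
  have "int_lattice w1 w2 = (\<lambda>(a::int, b::int). of_int a * w1 + of_int b * w2) ` UNIV"
    by (auto simp: int_lattice_def)
  then show ?thesis by simp
qed

lemma closed_int_lattice:
  assumes ind: "Im (cnj w1 * w2) \<noteq> 0"
  shows "closed (int_lattice w1 w2)"
proof -
  define f where "f = (\<lambda>p::real \<times> real. fst p *\<^sub>R w1 + snd p *\<^sub>R w2)"
  have lf: "linear f" unfolding f_def
    by (rule linearI) (auto simp: algebra_simps)
  have "inj f"
    unfolding linear_injective_0[OF lf]
  proof (intro allI impI)
    fix p :: "real \<times> real" assume "f p = 0"
    then have e: "fst p *\<^sub>R w1 + snd p *\<^sub>R w2 = 0" by (simp add: f_def)
    then have "Im (cnj w1 * (fst p *\<^sub>R w1 + snd p *\<^sub>R w2)) = 0" by simp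
    then have "snd p = 0" using ind by (simp add: algebra_simps scaleR_conv_of_real)
    moreover have "w1 \<noteq> 0" using ind by auto
    ultimately show "p = 0" using e by (simp add: prod_eq_iff)
  qed
  then have "closed (f ` (\<int> \<times> \<int>))"
    using lf closed_Times[OF closed_Ints closed_Ints] by (intro closed_injective_linear_image)
  moreover have "f ` (\<int> \<times> \<int>) = int_lattice w1 w2"
  proof (intro equalityI subsetI)
    fix x assume "x \<in> f ` (\<int> \<times> \<int>)"
    then obtain i j :: int where "x = of_int i *\<^sub>R w1 + of_int j *\<^sub>R w2"
      by (auto simp: f_def elim!: Ints_cases)
    then show "x \<in> int_lattice w1 w2" by (auto simp: int_lattice_def scaleR_conv_of_real)
  next
    fix x assume "x \<in> int_lattice w1 w2"
    then obtain i j :: int where "x = of_int i * w1 + of_int j * w2" by (auto simp: int_lattice_def)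
    then have "x = f (of_int i, of_int j)" by (simp add: f_def scaleR_conv_of_real)
    then show "x \<in> f ` (\<int> \<times> \<int>)" by auto
  qed
  ultimately show ?thesis by simp
qed

lemma int_lattice_covering_radius:
  assumes ind: "Im (cnj w1 * w2) \<noteq> 0"
  obtains l where "l \<in> int_lattice w1 w2" "cmod (z - l) \<le> cmod w1 + cmod w2"
proof -
  define s where "s = (Re z * Im w2 - Im z * Re w2) / Im (cnj w1 * w2)"
  define t where "t = (Re w1 * Im z - Im w1 * Re z) / Im (cnj w1 * w2)"
  define l where "l = of_int \<lfloor>s\<rfloor> * w1 + of_int \<lfloor>t\<rfloor> * w2"
  have "z - l = of_real (s - of_int \<lfloor>s\<rfloor>) * w1 + of_real (t - of_int \<lfloor>t\<rfloor>) * w2"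
    using complex_eq_real_combination[OF ind, of z] by (simp add: s_def t_def l_def algebra_simps)
  then have "cmod (z - l) \<le> \<bar>s - of_int \<lfloor>s\<rfloor>\<bar> * cmod w1 + \<bar>t - of_int \<lfloor>t\<rfloor>\<bar> * cmod w2"
    by (metis norm_mult norm_of_real norm_triangle_ineq)
  also have "\<dots> \<le> 1 * cmod w1 + 1 * cmod w2"
    by (intro add_mono mult_right_mono) (auto simp: abs_if, linarith+)
  finally show ?thesis using that[of l] by (auto simp: l_def int_lattice_def)
qed

subsection \<open>Digit sets and the interior of the attractor\<close>

definition digit_set :: "complex \<Rightarrow> complex set \<Rightarrow> complex set \<Rightarrow> bool" where
  "digit_set \<mu> D \<Lambda> \<longleftrightarrow> (\<forall>l\<in>\<Lambda>. \<exists>d\<in>D. \<exists>l'\<in>\<Lambda>. l = d + \<mu> * l')"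

lemma digit_set_div_power:
  assumes "digit_set \<mu> D \<Lambda>" "\<mu> \<noteq> 0" "l \<in> \<Lambda>"
  shows "\<exists>f\<in>expansions \<mu> D. \<exists>l'\<in>\<Lambda>. l / \<mu>^k = f + l'"
proof (induction k)
  case 0
  then show ?case using assms(3) by (intro bexI[of _ 0] expansions.zero bexI[of _ l]) auto
next
  case (Suc k)
  then obtain f l' where f: "f \<in> expansions \<mu> D" "l' \<in> \<Lambda>" "l / \<mu>^k = f + l'" by blast
  obtain d l'' where d: "d \<in> D" "l'' \<in> \<Lambda>" "l' = d + \<mu> * l''"
    using assms(1) f(2) by (auto simp: digit_set_def)
  have "l / \<mu>^Suc k = (d + f) / \<mu> + l''" using assms(2) by (simp add: f(3) d(3) field_simps)
  then show ?case using d f by (blast intro: expansions.step)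
qed

text \<open>The translates \<open>l + K\<close>, \<open>l \<in> \<Lambda>\<close>, form a closed set containing the dense set
  \<open>\<Union>\<^sub>k \<mu>\<^sup>-\<^sup>k \<Lambda>\<close>.\<close>

lemma lattice_translates_attractor_cover:
  assumes dig: "digit_set \<mu> D (int_lattice w1 w2)"
    and cm: "cmod \<mu> > 1" and fin: "finite D" and ind: "Im (cnj w1 * w2) \<noteq> 0"
  shows "(\<Union>l\<in>int_lattice w1 w2. (+) l ` attractor \<mu> D) = UNIV"
proof -
  let ?U = "\<Union>l\<in>int_lattice w1 w2. (+) l ` attractor \<mu> D"
  have mu: "\<mu> \<noteq> 0" using cm by auto
  have "?U = (\<Union>x\<in>int_lattice w1 w2. \<Union>y\<in>attractor \<mu> D. {x + y})" by auto
  then have "closed ?U"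
    using closed_compact_sums[OF closed_int_lattice[OF ind] compact_attractor[OF cm fin]] by simp
  moreover have "z \<in> closure ?U" for z
    unfolding closure_approachable
  proof (intro allI impI)
    fix e :: real assume e: "e > 0"
    define C where "C = cmod w1 + cmod w2"
    obtain k where k: "C / e < cmod \<mu> ^ k" using real_arch_pow[OF cm] by blast
    have pk: "cmod \<mu> ^ k > 0" using mu by simp
    obtain l where l: "l \<in> int_lattice w1 w2" "cmod (z * \<mu>^k - l) \<le> C"
      using int_lattice_covering_radius[OF ind] C_def by metis
    obtain f l' where f: "f \<in> expansions \<mu> D" "l' \<in> int_lattice w1 w2" "l / \<mu>^k = f + l'"
      using digit_set_div_power[OF dig mu l(1)] by blast
    have "f \<in> attractor \<mu> D" using f(1) closure_subset by (auto simp: attractor_def)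
    then have "l / \<mu>^k \<in> (+) l' ` attractor \<mu> D" using f(3) by (auto simp: add.commute)
    then have "l / \<mu>^k \<in> ?U" using f(2) by blast
    moreover have "dist (l / \<mu>^k) z = cmod (z * \<mu>^k - l) / cmod \<mu> ^ k"
      using mu by (simp add: dist_norm norm_divide[symmetric] norm_power[symmetric] field_simps norm_minus_commute)
    moreover have "cmod (z * \<mu>^k - l) / cmod \<mu> ^ k < e"
      using l(2) k e pk by (simp add: field_simps)
    ultimately show "\<exists>y\<in>?U. dist y z < e" by (metis order_le_less_trans order_refl)
  qed
  ultimately show ?thesis using closure_closed by auto
qed

lemma attractor_contains_ball:
  assumes "digit_set \<mu> D (int_lattice w1 w2)"
    and cm: "cmod \<mu> > 1" and fin: "finite D" and ind: "Im (cnj w1 * w2) \<noteq> 0"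
  obtains y r where "r > 0" "ball y r \<subseteq> attractor \<mu> D"
proof -
  let ?G = "(\<lambda>l. (+) l ` attractor \<mu> D) ` int_lattice w1 w2"
  have "\<exists>T\<in>?G. interior T \<noteq> {}"
  proof (rule ccontr)
    assume "\<not> ?thesis"
    then have "euclidean interior_of \<Union>?G = {}"
      using countable_int_lattice compact_attractor[OF cm fin]
      by (intro Baire_category_alt)
         (auto simp: completely_metrizable_space_euclidean compact_imp_closed closed_translation)
    then show False using lattice_translates_attractor_cover[OF assms] by simp
  qed
  then have "interior (attractor \<mu> D) \<noteq> {}" by (auto simp: interior_translation)
  then show ?thesis using that by (meson all_not_in_conv mem_interior)
qed

subsection \<open>Tessellations from a self-replicating tile\<close>

lemma pairwise_ess_disjoint_patch:
  fixes A :: complex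
  assumes K: "compact K" and fin: "finite E"
    and patch: "(*) A ` K = (\<Union>e\<in>E. (+) e ` K)" and card: "real (card E) \<le> cmod A ^ 2"
  shows "pairwise ess_disjoint ((\<lambda>e. (+) e ` K) ` E)"
proof (rule pairwise_ess_disjoint_if_measure_Union_ge)
  let ?S = "(\<lambda>e. (+) e ` K) ` E"
  show "finite ?S" using fin by simp
  show "X \<in> lmeasurable \<and> measure lebesgue X = measure lebesgue K" if "X \<in> ?S" for X
    using that K by (auto simp: measure_translation lmeasurable_compact compact_translation)
  have "real (card ?S) \<le> cmod A ^ 2" using card card_image_le[OF fin] by (meson of_nat_le_iff order_trans)
  moreover have "measure lebesgue (\<Union>?S) = cmod A ^ 2 * measure lebesgue K"
    using measure_mult_image_complex[OF K, of A] by (simp add: patch)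
  ultimately show "real (card ?S) * measure lebesgue K \<le> measure lebesgue (\<Union>?S)"
    by (simp add: mult_right_mono)
qed

text \<open>The nested patches \<open>A\<^sup>j K\<close> exhaust the plane; two tiles always lie in a common patch,
  where disjointness follows by counting.\<close>

lemma tessellation_of_patch:
  fixes A :: complex
  assumes cA: "cmod A > 1" and cK: "compact K" and ball0: "ball 0 \<rho> \<subseteq> K" and rho: "\<rho> > 0"
    and finE: "finite E" and E0: "0 \<in> E"
    and patch: "(*) A ` K = (\<Union>e\<in>E. (+) e ` K)"
    and cardE: "real (card E) \<le> cmod A ^ 2"
  shows "\<exists>T. (\<forall>t\<in>T. \<exists>v. t = (+) v ` K) \<and> pairwise ess_disjoint T \<and> \<Union>T = UNIV"
proof -
  define T where "T = (\<lambda>d. (+) d ` K) ` (\<Union>j. radix_sums A E j)"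
  have A0: "A \<noteq> 0" using cA by auto
  have "\<Union>T = UNIV"
  proof (intro equalityI subsetI UNIV_I)
    fix z :: complex
    obtain j where j: "cmod z / \<rho> < cmod A ^ j" using real_arch_pow[OF cA] by blast
    have "z / A^j \<in> ball 0 \<rho>"
      using j rho A0 by (simp add: norm_divide norm_power field_simps)
    then have "z \<in> (*) (A^j) ` K" using ball0 A0 by (auto simp: image_iff intro!: bexI[of _ "z / A^j"])
    then show "z \<in> \<Union>T" unfolding mult_power_image_eq_radix_sums[OF patch] T_def by auto
  qed
  moreover have "pairwise ess_disjoint T"
  proof (rule pairwiseI)
    fix t1 t2 assume t: "t1 \<in> T" "t2 \<in> T" "t1 \<noteq> t2"
    obtain j1 d1 where d1: "d1 \<in> radix_sums A E j1" "t1 = (+) d1 ` K" using t(1) by (auto simp: T_def)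
    obtain j2 d2 where d2: "d2 \<in> radix_sums A E j2" "t2 = (+) d2 ` K" using t(2) by (auto simp: T_def)
    define j where "j = max j1 j2"
    have "d1 \<in> radix_sums A E j" "d2 \<in> radix_sums A E j"
      using d1 d2 radix_sums_mono[OF E0, of j1 j A] radix_sums_mono[OF E0, of j2 j A] by (auto simp: j_def)
    moreover have "pairwise ess_disjoint ((\<lambda>d. (+) d ` K) ` radix_sums A E j)"
    proof (rule pairwise_ess_disjoint_patch[OF cK finite_radix_sums[OF finE]])
      show "(*) (A^j) ` K = (\<Union>d\<in>radix_sums A E j. (+) d ` K)"
        by (rule mult_power_image_eq_radix_sums[OF patch])
      have "real (card (radix_sums A E j)) \<le> real (card E) ^ j"
        using card_radix_sums_le[OF finE] by (metis of_nat_le_iff of_nat_power)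
      also have "\<dots> \<le> (cmod A ^ 2) ^ j" using cardE by (simp add: power_mono)
      also have "\<dots> = cmod (A^j) ^ 2" by (simp add: norm_power flip: power_mult) (simp add: mult.commute)
      finally show "real (card (radix_sums A E j)) \<le> cmod (A^j) ^ 2" .
    qed
    ultimately show "ess_disjoint t1 t2" using d1 d2 t(3) by (auto simp: pairwise_def)
  qed
  moreover have "\<forall>t\<in>T. \<exists>v. t = (+) v ` K" by (auto simp: T_def)
  ultimately show ?thesis by blast
qed

text \<open>For \<open>|A|\<close> large compared with the size of \<open>K\<close> relative to an inner ball, one of the
  contractions \<open>z \<mapsto> (z + e)/A\<close> of the patch has its fixed point deep inside \<open>K\<close>.\<close>

lemma patch_fixed_point_in_ball:
  fixes A :: complex
  assumes patch: "(*) A ` K = (\<Union>e\<in>E. (+) e ` K)" and KB: "K \<subseteq> cball 0 B"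
    and ball: "ball y r \<subseteq> K" and r: "r > 0"
    and cA: "cmod A > 3" "cmod A > 6 * B / r"
  obtains x e where "e \<in> E" "A * x = x + e" "ball x (r/2) \<subseteq> K"
proof -
  have yK: "y \<in> K" using ball r by auto
  have yB: "cmod y \<le> B" using KB yK by auto
  then have B0: "B \<ge> 0" using norm_ge_zero[of y] by linarith
  have A1: "A \<noteq> 1" using cA by auto
  have "A * y \<in> (\<Union>e\<in>E. (+) e ` K)" using yK patch by blast
  then obtain e where e: "e \<in> E" "A * y - e \<in> K" by force
  define k0 where "k0 = A * y - e"
  define x where "x = e / (A - 1)"
  have Ax: "A * x = x + e" using A1 by (simp add: x_def field_simps)
  have k0B: "cmod k0 \<le> B" using KB e(2) by (auto simp: k0_def)
  have "cmod e \<le> cmod A * cmod y + cmod k0"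
    using norm_triangle_ineq4[of "A * y" k0] by (simp add: k0_def norm_mult)
  also have "\<dots> \<le> cmod A * B + B" using yB k0B by (intro add_mono mult_left_mono) auto
  finally have "cmod e \<le> cmod A * B + B" .
  moreover have "cmod A - 1 \<le> cmod (A - 1)" by (metis norm_one norm_triangle_ineq2)
  ultimately have "cmod x \<le> (cmod A * B + B) / (cmod A - 1)"
    using cA by (simp add: x_def norm_divide frac_le B0)
  also have "\<dots> \<le> 2 * B" using cA B0 mult_left_mono[of 3 "cmod A" B] by (simp add: field_simps)
  finally have xB: "cmod x \<le> 2 * B" .
  have "A * (x - y) = x - k0" using Ax by (simp add: k0_def algebra_simps)
  then have "cmod A * cmod (x - y) = cmod (x - k0)" by (metis norm_mult)
  also have "\<dots> \<le> 3 * B" using norm_triangle_ineq4[of x k0] xB k0B by linarith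
  finally have "cmod A * cmod (x - y) \<le> 3 * B" .
  moreover have "6 * B < r * cmod A" using cA(2) r by (simp add: field_simps)
  ultimately have "cmod A * (2 * cmod (x - y)) < cmod A * r"
    by (simp add: algebra_simps)
  then have "2 * cmod (x - y) < r" by (rule mult_left_less_imp_less) simp
  then have xy: "dist y x < r / 2" by (simp add: dist_norm norm_minus_commute)
  have "ball x (r/2) \<subseteq> ball y r"
  proof
    fix z assume "z \<in> ball x (r/2)"
    then show "z \<in> ball y r" using dist_triangle[of y z x] xy by simp
  qed
  then show ?thesis using that e(1) Ax ball by blast
qed

lemma mult_image_translate_fixed_point:
  fixes A :: complex
  assumes patch: "(*) A ` K = (\<Union>d\<in>E. (+) d ` K)" and Ax: "A * x = x + e"
  shows "(*) A ` ((+) (- x) ` K) = (\<Union>d'\<in>(\<lambda>d. d - e) ` E. (+) d' ` ((+) (- x) ` K))"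
proof -
  have "(*) A ` ((+) (- x) ` K) = (\<Union>d\<in>E. (+) (A * - x) ` ((+) d ` K))"
    by (simp only: mult_image_translate patch image_UN)
  also have "\<dots> = (\<Union>d\<in>E. (+) (d - e) ` ((+) (- x) ` K))"
    using Ax by (intro SUP_cong refl) (simp add: image_image algebra_simps)
  finally show ?thesis by simp
qed

lemma is_tile_if_compact_ball:
  assumes "compact K" "ball y r \<subseteq> K" "r > 0"
  shows "is_tile K"
proof -
  have "emeasure lebesgue (ball y r) \<le> emeasure lebesgue K"
    using assms by (intro emeasure_mono) (auto simp: compact_imp_closed borel_closed)
  moreover have "emeasure lebesgue (ball y r) > 0" using assms(3) by (simp add: emeasure_ball)
  ultimately show ?thesis
    using assms(1) by (simp add: is_tile_def compact_imp_closed borel_closed compact_imp_bounded)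
qed

lemma inflationary_tessellation_of_self_similar_tile:
  fixes \<mu> :: complex
  assumes tile: "is_tile K" and K: "compact K" and fin: "finite D"
    and patch: "(*) \<mu> ` K = (\<Union>d\<in>D. (+) d ` K)" and card: "real (card D) \<le> cmod \<mu> ^ 2"
    and T: "\<forall>t\<in>T. \<exists>v. t = (+) v ` K" "pairwise ess_disjoint T" "\<Union>T = UNIV"
  shows "inflationary_tessellation (\<lambda>z. \<mu> * z) (\<lambda>_. K) 1 T"
proof -
  have "of_type (\<lambda>_. K) 1 ((+) v ` K)" for v by (auto simp: of_type_def)
  moreover have "pairwise ess_disjoint ((\<lambda>d. (+) d ` K) ` D)"
    by (rule pairwise_ess_disjoint_patch[OF K fin patch card])
  ultimately show ?thesis
    using T tile patch unfolding inflationary_tessellation_def tessellation_def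
    by (intro conjI allI impI exI[of _ "(\<lambda>d. (+) d ` K) ` D"]) auto
qed

lemma tiling_by_translates_of_self_similar_set:
  fixes \<mu> :: complex
  assumes cm: "cmod \<mu> > 1" and cK: "compact K" and r: "r > 0" "ball y r \<subseteq> K"
    and fin: "finite D" and patch: "(*) \<mu> ` K = (\<Union>d\<in>D. (+) d ` K)"
    and card: "real (card D) \<le> cmod \<mu> ^ 2"
  obtains T where "\<forall>t\<in>T. \<exists>v. t = (+) v ` K" "pairwise ess_disjoint T" "\<Union>T = UNIV"
proof -
  obtain B where "\<forall>x\<in>K. cmod x \<le> B" using compact_imp_bounded[OF cK] by (auto simp: bounded_iff)
  then have KB: "K \<subseteq> cball 0 B" by auto
  obtain k where k: "max 3 (6 * B / r) < cmod \<mu> ^ k" using real_arch_pow[OF cm] by blast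
  define A where "A = \<mu> ^ k"
  define E where "E = radix_sums \<mu> D k"
  have patchA: "(*) A ` K = (\<Union>e\<in>E. (+) e ` K)"
    unfolding A_def E_def by (rule mult_power_image_eq_radix_sums[OF patch])
  have "cmod A > 3" "cmod A > 6 * B / r" using k by (auto simp: A_def norm_power)
  then obtain x e where e: "e \<in> E" "A * x = x + e" "ball x (r/2) \<subseteq> K"
    using patch_fixed_point_in_ball[OF patchA KB r(2,1)] by blast
  have "real (card ((\<lambda>d. d - e) ` E)) \<le> real (card D) ^ k"
    using card_image_le[of E] card_radix_sums_le[OF fin, of \<mu> k] finite_radix_sums[OF fin]
    by (metis E_def of_nat_le_iff of_nat_power order_trans)
  also have "\<dots> \<le> (cmod \<mu> ^ 2) ^ k" using card by (simp add: power_mono)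
  also have "\<dots> = cmod A ^ 2" by (simp add: A_def norm_power flip: power_mult) (simp add: mult.commute)
  finally have cardE: "real (card ((\<lambda>d. d - e) ` E)) \<le> cmod A ^ 2" .
  have ball0: "ball 0 (r/2) \<subseteq> (+) (- x) ` K"
  proof
    fix z :: complex assume "z \<in> ball 0 (r/2)"
    then have "x + z \<in> K" using e(3) by (auto simp: dist_norm)
    then show "z \<in> (+) (- x) ` K" by (rule rev_image_eqI) simp
  qed
  have E0: "0 \<in> (\<lambda>d. d - e) ` E" using e(1) by (rule rev_image_eqI) simp
  have finE: "finite ((\<lambda>d. d - e) ` E)" by (simp add: E_def finite_radix_sums[OF fin])
  have "cmod A > 1" using \<open>cmod A > 3\<close> by simp
  from tessellation_of_patch[OF this compact_translation[OF cK] ball0 _ finE E0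
      mult_image_translate_fixed_point[OF patchA e(2)] cardE] r(1)
  obtain T where T: "\<forall>t\<in>T. \<exists>v. t = (+) v ` ((+) (- x) ` K)" "pairwise ess_disjoint T" "\<Union>T = UNIV"
    by auto
  have "\<forall>t\<in>T. \<exists>v. t = (+) v ` K"
  proof
    fix t assume "t \<in> T"
    then obtain v where "t = (+) v ` ((+) (- x) ` K)" using T(1) by blast
    then have "t = (+) (v - x) ` K" by (simp add: image_image algebra_simps)
    then show "\<exists>v. t = (+) v ` K" ..
  qed
  then show ?thesis using that T(2,3) by blast
qed

lemma inflationary_tessellation_of_digit_set:
  assumes cm: "cmod \<mu> > 1" and fin: "finite D" and D0: "0 \<in> D"
    and card: "real (card D) \<le> cmod \<mu> ^ 2"
    and dig: "digit_set \<mu> D (int_lattice w1 w2)" and ind: "Im (cnj w1 * w2) \<noteq> 0"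
  shows "\<exists>R N T. inflationary_tessellation (\<lambda>z. \<mu> * z) R N T"
proof -
  define K where "K = attractor \<mu> D"
  have cK: "compact K" using compact_attractor[OF cm fin] by (simp add: K_def)
  have "\<mu> \<noteq> 0" using cm by auto
  then have patch: "(*) \<mu> ` K = (\<Union>d\<in>D. (+) d ` K)"
    unfolding K_def by (rule mult_image_attractor[OF _ D0 fin])
  obtain y r where r: "r > 0" "ball y r \<subseteq> K"
    unfolding K_def by (rule attractor_contains_ball[OF dig cm fin ind])
  obtain T where "\<forall>t\<in>T. \<exists>v. t = (+) v ` K" "pairwise ess_disjoint T" "\<Union>T = UNIV"
    using tiling_by_translates_of_self_similar_set[OF cm cK r fin patch card] .
  then have "inflationary_tessellation (\<lambda>z. \<mu> * z) (\<lambda>_. K) 1 T"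
    using is_tile_if_compact_ball[OF cK r(2,1)] cK fin patch card
    by (intro inflationary_tessellation_of_self_similar_tile) auto
  then show ?thesis by blast
qed

subsection \<open>The real line\<close>

lemma mult_stable_real_lattice_imp_Ints:
  fixes L :: "real set"
  assumes lat: "lattice L" and st: "\<forall>x\<in>L. \<mu> * x \<in> L"
  shows "\<mu> \<in> \<int>"
proof (rule ccontr)
  assume "\<mu> \<notin> \<int>"
  then have "\<mu> \<noteq> of_int \<lfloor>\<mu>\<rfloor>" by (metis Ints_of_int)
  then have f: "0 < \<mu> - \<lfloor>\<mu>\<rfloor>" "\<mu> - \<lfloor>\<mu>\<rfloor> < 1" by linarith+
  obtain x0 where "x0 \<in> L" "x0 \<noteq> 0" using lattice_nonzero[OF lat] .
  then obtain w where w: "w \<in> L - {0}" "\<forall>s\<in>L - {0}. norm w \<le> norm s"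
    using lattice_has_min_norm[OF lat, of "L - {0}" x0] by auto
  have "\<mu> * w - of_int \<lfloor>\<mu>\<rfloor> *\<^sub>R w \<in> L"
    using w st lat by (intro lattice_diff lattice_of_int_scaleR) auto
  then have "(\<mu> - \<lfloor>\<mu>\<rfloor>) * w \<in> L - {0}" using f w by (simp add: algebra_simps)
  then have "norm w \<le> norm ((\<mu> - \<lfloor>\<mu>\<rfloor>) * w)" using w(2) by blast
  moreover have "norm ((\<mu> - \<lfloor>\<mu>\<rfloor>) * w) < norm w" using f w by (simp add: abs_mult)
  ultimately show False by simp
qed

definition unit_interval :: "int \<Rightarrow> real set" where
  "unit_interval j = {of_int j .. of_int j + 1}"

lemma ess_disjoint_unit_interval:
  assumes "i < j"
  shows "ess_disjoint (unit_interval i) (unit_interval j)"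
proof -
  have "of_int i + 1 \<le> (of_int j :: real)" using assms by linarith
  then have "unit_interval i \<inter> unit_interval j \<subseteq> {of_int j}" by (auto simp: unit_interval_def)
  moreover have "unit_interval i \<inter> unit_interval j \<in> sets lebesgue" by (simp add: unit_interval_def)
  moreover have "{of_int j :: real} \<in> null_sets lebesgue" by simp
  ultimately show ?thesis unfolding ess_disjoint_def by (metis null_sets_subset)
qed

lemma pairwise_ess_disjoint_unit_intervals: "pairwise ess_disjoint (unit_interval ` A)"
proof (rule pairwise_imageI)
  fix i j assume "unit_interval i \<noteq> unit_interval j"
  then have "i < j \<or> j < i" by auto
  then show "ess_disjoint (unit_interval i) (unit_interval j)"
    by (metis ess_disjoint_unit_interval ess_disjoint_def Int_commute)
qed

lemma of_type_unit_interval: "of_type (\<lambda>_. {0..1}) 1 (unit_interval j)"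
  unfolding of_type_def unit_interval_def
  by (intro exI[of _ 0] conjI exI[of _ "of_int j"]) (auto simp: add.commute)

lemma Union_unit_intervals:
  assumes "lo < hi"
  shows "\<Union>(unit_interval ` {lo..<hi}) = {of_int lo .. of_int hi}"
proof (intro equalityI subsetI)
  fix x assume "x \<in> {real_of_int lo .. of_int hi}"
  then have "\<lfloor>x\<rfloor> \<in> {lo..<hi} \<and> x \<in> unit_interval \<lfloor>x\<rfloor> \<or> x \<in> unit_interval (hi - 1)"
    using assms by (cases "x < of_int hi") (auto simp: unit_interval_def le_floor_iff floor_less_iff)
  then show "x \<in> \<Union>(unit_interval ` {lo..<hi})" using assms by force
qed (auto simp: unit_interval_def)

lemma inflationary_tessellation_unit_intervals:
  assumes "m \<noteq> 0"
  shows "inflationary_tessellation (\<lambda>z. of_int m * z) (\<lambda>_. {0..1}) 1 (range unit_interval)"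
proof -
  define lo where "lo = min 0 m"
  define hi where "hi = max 0 m"
  have "(\<lambda>z. of_int m * z) ` {0..1} = {of_int lo .. of_int hi :: real}"
    using assms by (auto simp: lo_def hi_def image_mult_atLeastAtMost_if min_def max_def)
  also have "\<dots> = \<Union>(unit_interval ` {lo..<hi})"
    using assms by (intro Union_unit_intervals[symmetric]) (auto simp: lo_def hi_def)
  finally have "\<Union>(unit_interval ` {lo..<hi}) = (\<lambda>z. of_int m * z) ` {0..1}" ..
  moreover have "\<Union>(range unit_interval) = UNIV"
  proof (intro equalityI subsetI UNIV_I)
    fix x :: real
    have "x \<in> unit_interval \<lfloor>x\<rfloor>" by (simp add: unit_interval_def)
    then show "x \<in> \<Union>(range unit_interval)" by blast
  qed
  ultimately show ?thesis
    unfolding inflationary_tessellation_def tessellation_def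
    using of_type_unit_interval pairwise_ess_disjoint_unit_intervals
    by (intro conjI allI impI exI[of _ "unit_interval ` {lo..<hi}"]) (auto simp: is_tile_def)
qed

subsection \<open>Planar lattices and their multipliers\<close>

lemma cmod_add_less:
  assumes "Im (cnj a * b) \<noteq> 0"
  shows "cmod (a + b) < cmod a + cmod b"
proof -
  have "\<bar>Re (cnj a * b)\<bar>^2 < (cmod (cnj a * b))^2"
    using assms by (simp add: cmod_power2)
  then have "\<bar>Re (cnj a * b)\<bar> < cmod (cnj a * b)"
    by (rule power2_less_imp_less) simp
  then have re: "Re (cnj a * b) < cmod a * cmod b" by (simp add: norm_mult)
  have "(cmod (a + b))^2 = (cmod a)^2 + (cmod b)^2 + 2 * Re (cnj a * b)"
    by (simp only: cmod_power2) (simp add: power2_eq_square algebra_simps)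
  also have "\<dots> < (cmod a + cmod b)^2" using re by (simp add: power2_eq_square algebra_simps)
  finally show ?thesis by (rule power2_less_imp_less) simp
qed

lemma cmod_half_combination_less:
  assumes ind: "Im (cnj w1 * w2) \<noteq> 0" and w12: "cmod w1 \<le> cmod w2"
    and \<sigma>: "\<bar>\<sigma>\<bar> \<le> 1/2" and \<tau>: "\<bar>\<tau>\<bar> \<le> 1/2" "\<tau> \<noteq> 0"
  shows "cmod (of_real \<sigma> * w1 + of_real \<tau> * w2) < cmod w2"
proof (cases "\<sigma> = 0")
  case True
  have "w2 \<noteq> 0" using ind by auto
  then show ?thesis using True \<tau>(1) by (simp add: norm_mult)
next
  case False
  have "Im (cnj (of_real \<sigma> * w1) * (of_real \<tau> * w2)) = \<sigma> * \<tau> * Im (cnj w1 * w2)"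
    by (simp add: algebra_simps)
  then have "Im (cnj (of_real \<sigma> * w1) * (of_real \<tau> * w2)) \<noteq> 0" using False \<tau>(2) ind by simp
  then have "cmod (of_real \<sigma> * w1 + of_real \<tau> * w2) < \<bar>\<sigma>\<bar> * cmod w1 + \<bar>\<tau>\<bar> * cmod w2"
    using cmod_add_less by (fastforce simp: norm_mult)
  also have "\<dots> \<le> 1/2 * cmod w2 + 1/2 * cmod w2"
    using \<sigma> \<tau> w12 by (intro add_mono mult_mono) auto
  finally show ?thesis by simp
qed

lemma lattice_of_int_mult_complex: "lattice L \<Longrightarrow> x \<in> L \<Longrightarrow> of_int n * (x::complex) \<in> L"
  using lattice_of_int_scaleR[of L x n] by (simp add: scaleR_conv_of_real)

text \<open>In the next two lemmas \<open>w\<^sub>1\<close> is a shortest nonzero vector and \<open>w\<^sub>2\<close> a shortest vector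
  independent of \<open>w\<^sub>1\<close>; a non-integral coordinate could be reduced modulo \<open>1\<close> to produce a
  shorter vector.\<close>

lemma shortest_vector_real_multiple_Ints:
  fixes L :: "complex set"
  assumes lat: "lattice L" and w1: "w1 \<in> L - {0}" and min1: "\<forall>s\<in>L - {0}. cmod w1 \<le> cmod s"
    and sL: "of_real s * w1 \<in> L"
  shows "s \<in> \<int>"
proof (rule ccontr)
  assume "s \<notin> \<int>"
  then have "s \<noteq> of_int \<lfloor>s\<rfloor>" by (metis Ints_of_int)
  then have \<sigma>: "0 < s - \<lfloor>s\<rfloor>" "s - \<lfloor>s\<rfloor> < 1" by linarith+
  define l' where "l' = of_real (s - \<lfloor>s\<rfloor>) * w1"
  have "l' = of_real s * w1 - of_int \<lfloor>s\<rfloor> * w1" by (simp add: l'_def algebra_simps)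
  then have "l' \<in> L" using lat sL w1 by (simp add: lattice_diff lattice_of_int_mult_complex)
  moreover have "l' \<noteq> 0" using \<sigma> w1 unfolding l'_def by (metis DiffD2 mult_eq_0_iff of_real_eq_0_iff less_irrefl singletonI)
  ultimately have "cmod w1 \<le> cmod l'" using min1 by blast
  moreover have "cmod l' = \<bar>s - \<lfloor>s\<rfloor>\<bar> * cmod w1" unfolding l'_def norm_mult norm_of_real ..
  then have "cmod l' < cmod w1" using \<sigma> w1 by simp
  ultimately show False by simp
qed

lemma reduced_basis_second_coordinate_Ints:
  fixes L :: "complex set"
  assumes lat: "lattice L" and w: "w1 \<in> L - {0}" "w2 \<in> L" and ind: "Im (cnj w1 * w2) \<noteq> 0"
    and min1: "\<forall>s\<in>L - {0}. cmod w1 \<le> cmod s"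
    and min2: "\<forall>s\<in>{s\<in>L. Im (cnj w1 * s) \<noteq> 0}. cmod w2 \<le> cmod s"
    and stL: "of_real s * w1 + of_real t * w2 \<in> L"
  shows "t \<in> \<int>"
proof (rule ccontr)
  assume "t \<notin> \<int>"
  define \<sigma> where "\<sigma> = s - \<lfloor>s + 1/2\<rfloor>"
  define \<tau> where "\<tau> = t - \<lfloor>t + 1/2\<rfloor>"
  have "\<tau> \<noteq> 0" using \<open>t \<notin> \<int>\<close> unfolding \<tau>_def by (metis Ints_of_int right_minus_eq)
  define l' where "l' = of_real \<sigma> * w1 + of_real \<tau> * w2"
  have "l' = (of_real s * w1 + of_real t * w2) - of_int \<lfloor>s + 1/2\<rfloor> * w1 - of_int \<lfloor>t + 1/2\<rfloor> * w2"
    by (simp add: l'_def \<sigma>_def \<tau>_def algebra_simps)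
  then have "l' \<in> L" using lat stL w by (simp add: lattice_diff lattice_of_int_mult_complex)
  moreover have "Im (cnj w1 * l') = \<tau> * Im (cnj w1 * w2)" by (simp add: l'_def algebra_simps)
  then have "Im (cnj w1 * l') \<noteq> 0" using \<open>\<tau> \<noteq> 0\<close> ind by simp
  ultimately have "cmod w2 \<le> cmod l'" using min2 by blast
  moreover have "w2 \<noteq> 0" using ind by auto
  then have "cmod w1 \<le> cmod w2" using min1 w(2) by auto
  moreover have "\<bar>\<sigma>\<bar> \<le> 1/2" "\<bar>\<tau>\<bar> \<le> 1/2" unfolding \<sigma>_def \<tau>_def by linarith+
  ultimately show False
    using cmod_half_combination_less[OF ind _ _ _ \<open>\<tau> \<noteq> 0\<close>] by (fastforce simp: l'_def)
qed

lemma reduced_basis_generates_lattice: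
  fixes L :: "complex set"
  assumes lat: "lattice L" and w: "w1 \<in> L - {0}" "w2 \<in> L" and ind: "Im (cnj w1 * w2) \<noteq> 0"
    and min1: "\<forall>s\<in>L - {0}. cmod w1 \<le> cmod s"
    and min2: "\<forall>s\<in>{s\<in>L. Im (cnj w1 * s) \<noteq> 0}. cmod w2 \<le> cmod s"
    and l: "l \<in> L"
  shows "l \<in> int_lattice w1 w2"
proof -
  define s where "s = (Re l * Im w2 - Im l * Re w2) / Im (cnj w1 * w2)"
  define t where "t = (Re w1 * Im l - Im w1 * Re l) / Im (cnj w1 * w2)"
  have lst: "l = of_real s * w1 + of_real t * w2"
    using complex_eq_real_combination[OF ind, of l] by (simp add: s_def t_def)
  then have "t \<in> \<int>" using reduced_basis_second_coordinate_Ints[OF lat w ind min1 min2] l by simp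
  then obtain b where b: "t = of_int b" by (auto elim: Ints_cases)
  have "of_real s * w1 = l - of_int b * w2" by (simp add: lst b)
  then have "of_real s * w1 \<in> L" using lat l w by (simp add: lattice_diff lattice_of_int_mult_complex)
  then have "s \<in> \<int>" by (rule shortest_vector_real_multiple_Ints[OF lat w(1) min1])
  then obtain a where "s = of_int a" by (auto elim: Ints_cases)
  then show ?thesis using lst b by (auto simp: int_lattice_def)
qed

lemma in_span_if_Im_cnj_mult_eq_0:
  assumes "w \<noteq> 0" "Im (cnj w * l) = 0"
  shows "l \<in> span {w}"
proof -
  have "cnj w * l = of_real (Re (cnj w * l))" using assms(2) by (simp add: complex_eq_iff)
  then have "of_real ((cmod w)^2) * l = w * of_real (Re (cnj w * l))"
    by (metis complex_mult_cnj cmod_power2 mult.assoc of_real_add of_real_power)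
  then have "l = (Re (cnj w * l) / (cmod w)^2) *\<^sub>R w"
    using assms(1) by (simp add: scaleR_conv_of_real field_simps flip: of_real_mult)
  then show ?thesis by (metis span_base span_scale singletonI)
qed

lemma complex_lattice_basis:
  fixes L :: "complex set"
  assumes lat: "lattice L"
  obtains w1 w2 where "w1 \<in> L" "w2 \<in> L" "Im (cnj w1 * w2) \<noteq> 0" "L \<subseteq> int_lattice w1 w2"
proof -
  obtain x0 where "x0 \<in> L" "x0 \<noteq> 0" using lattice_nonzero[OF lat] .
  then obtain w1 where w1: "w1 \<in> L - {0}" "\<forall>s\<in>L - {0}. cmod w1 \<le> cmod s"
    using lattice_has_min_norm[OF lat, of "L - {0}" x0] by auto
  have "\<exists>l\<in>L. Im (cnj w1 * l) \<noteq> 0"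
  proof (rule ccontr)
    assume "\<not> ?thesis"
    then have "L \<subseteq> span {w1}" using w1(1) in_span_if_Im_cnj_mult_eq_0 by blast
    then have "dim L \<le> 1" using dim_le_card[of L "{w1}"] by simp
    then show False using lat by (simp add: lattice_def)
  qed
  then obtain l2 where "l2 \<in> {s\<in>L. Im (cnj w1 * s) \<noteq> 0}" by blast
  then obtain w2 where w2: "w2 \<in> {s\<in>L. Im (cnj w1 * s) \<noteq> 0}"
    "\<forall>s\<in>{s\<in>L. Im (cnj w1 * s) \<noteq> 0}. cmod w2 \<le> cmod s"
    using lattice_has_min_norm[OF lat] by (metis (no_types, lifting) mem_Collect_eq subsetI)
  then have "L \<subseteq> int_lattice w1 w2"
    using w1 by (auto intro: reduced_basis_generates_lattice[OF lat w1(1)])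
  then show ?thesis using that w1(1) w2(1) by blast
qed

text \<open>\<open>\<mu>\<close> is an eigenvalue of the integer matrix of \<open>z \<mapsto> \<mu> z\<close> in the basis \<open>w\<^sub>1, w\<^sub>2\<close>,
  hence a root of \<open>X\<^sup>2 - t X + n\<close> with \<open>t, n \<in> \<int>\<close>; for non-real \<open>\<mu>\<close> the other root is
  \<open>cnj \<mu>\<close>, so \<open>n = |\<mu>|\<^sup>2\<close>.\<close>

lemma lattice_multiplier_cases:
  assumes ind: "Im (cnj w1 * w2) \<noteq> 0"
    and st: "\<mu> * w1 \<in> int_lattice w1 w2" "\<mu> * w2 \<in> int_lattice w1 w2"
  shows "\<mu> \<in> \<int> \<or>
    Im \<mu> \<noteq> 0 \<and> (\<exists>t n :: int. \<mu> * \<mu> = of_int t * \<mu> - of_int n \<and> of_int n = (cmod \<mu>)^2)"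
proof (cases "Im \<mu> = 0")
  have w10: "w1 \<noteq> 0" using ind by auto
  obtain a b :: int where ab: "\<mu> * w1 = of_int a * w1 + of_int b * w2"
    using st(1) by (auto simp: int_lattice_def)
  obtain c d :: int where cd: "\<mu> * w2 = of_int c * w1 + of_int d * w2"
    using st(2) by (auto simp: int_lattice_def)
  {
    case True
    have "of_int b * Im (cnj w1 * w2) = Im (cnj w1 * (\<mu> * w1))"
      unfolding ab by (simp add: algebra_simps)
    also have "\<dots> = 0" using True by (simp add: algebra_simps)
    finally have "b = 0" using ind by simp
    then have "\<mu> = of_int a" using ab w10 by simp
    then show ?thesis by simp
  next
    case False
    have "(\<mu> - of_int a) * w1 = of_int b * w2" using ab by (simp add: algebra_simps)
    then have "(\<mu> - of_int a) * (\<mu> - of_int d) * w1 = of_int b * ((\<mu> - of_int d) * w2)"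
      by (metis mult.assoc mult.commute)
    also have "\<dots> = of_int b * of_int c * w1" using cd by (simp add: algebra_simps)
    finally have "(\<mu> - of_int a) * (\<mu> - of_int d) = of_int b * of_int c" using w10 by simp
    then have q: "\<mu> * \<mu> = of_int (a + d) * \<mu> - of_int (a * d - b * c)"
      by (simp add: algebra_simps)
    define t n where "t = a + d" and "n = a * d - b * c"
    have "Im (\<mu> * \<mu>) = Im (of_int t * \<mu> - of_int n)" using q by (simp add: t_def n_def)
    then have "of_int t = 2 * Re \<mu>" using False by simp
    moreover have "Re (\<mu> * \<mu>) = Re (of_int t * \<mu> - of_int n)" using q by (simp add: t_def n_def)
    ultimately have "of_int n = (cmod \<mu>)^2" by (simp add: cmod_power2) (simp add: power2_eq_square)
    moreover have "\<mu> * \<mu> = of_int t * \<mu> - of_int n" using q by (simp add: t_def n_def)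
    ultimately show ?thesis using False by blast
  }
qed

lemma gaussian_integer_digit_set:
  assumes mu: "\<mu> = of_int a" and a0: "a \<noteq> 0"
  obtains D where "finite D" "0 \<in> D" "real (card D) \<le> (cmod \<mu>)^2" "digit_set \<mu> D (int_lattice 1 \<i>)"
proof -
  define k where "k = \<bar>a\<bar>"
  define D where "D = (\<lambda>(i, j). of_int i + \<i> * of_int j :: complex) ` ({0..<k} \<times> {0..<k})"
  have k0: "k > 0" using a0 by (simp add: k_def)
  have "digit_set \<mu> D (int_lattice 1 \<i>)"
    unfolding digit_set_def
  proof
    fix l assume "l \<in> int_lattice 1 \<i>"
    then obtain x y :: int where l: "l = of_int x + of_int y * \<i>" by (auto simp: int_lattice_def)
    define l' where "l' = of_int (sgn a * (x div k)) * 1 + of_int (sgn a * (y div k)) * \<i>"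
    have "of_int (x mod k) + \<i> * of_int (y mod k) \<in> D"
      using k0 unfolding D_def by (intro image_eqI[of _ _ "(x mod k, y mod k)"]) auto
    moreover have "l' \<in> int_lattice 1 \<i>" unfolding l'_def int_lattice_def by blast
    moreover have "l = (of_int (x mod k) + \<i> * of_int (y mod k)) + \<mu> * l'"
    proof -
      have "(of_int k :: complex) = of_int a * of_int (sgn a)"
        by (metis k_def abs_sgn mult.commute of_int_mult)
      moreover have "of_int x = (of_int (x mod k) + of_int k * of_int (x div k) :: complex)"
        "of_int y = (of_int (y mod k) + of_int k * of_int (y div k) :: complex)"
        by (metis mod_mult_div_eq of_int_add of_int_mult add.commute)+
      ultimately show ?thesis unfolding l l'_def mu by (simp add: algebra_simps)
    qed
    ultimately show "\<exists>d\<in>D. \<exists>l'\<in>int_lattice 1 \<i>. l = d + \<mu> * l'" by blast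
  qed
  moreover have "0 \<in> D" using k0 by (force simp: D_def image_iff)
  moreover have "real (card D) \<le> (cmod \<mu>)^2"
  proof -
    have "card D \<le> card ({0..<k} \<times> {0..<k})" unfolding D_def by (rule card_image_le) simp
    also have "\<dots> = nat k * nat k" by (simp add: card_cartesian_product)
    finally have "real (card D) \<le> real (nat k * nat k)" by linarith
    also have "\<dots> = (cmod \<mu>)^2" using k0 by (simp add: mu k_def power2_eq_square)
    finally show ?thesis .
  qed
  moreover have "finite D" by (simp add: D_def)
  ultimately show ?thesis using that by blast
qed

lemma quadratic_digit_set:
  assumes q: "\<mu> * \<mu> = of_int t * \<mu> - of_int n" and n: "of_int n = (cmod \<mu>)^2" "n > 0"
  obtains D where "finite D" "0 \<in> D" "real (card D) \<le> (cmod \<mu>)^2" "digit_set \<mu> D (int_lattice 1 \<mu>)"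
proof
  show "finite (of_int ` {0..<n} :: complex set)" by simp
  show "0 \<in> (of_int ` {0..<n} :: complex set)" using n(2) by force
  show "real (card (of_int ` {0..<n} :: complex set)) \<le> (cmod \<mu>)^2"
    using card_image_le[of "{0..<n}" "of_int :: int \<Rightarrow> complex"] n by simp
next
  show "digit_set \<mu> (of_int ` {0..<n}) (int_lattice 1 \<mu>)"
    unfolding digit_set_def
  proof
    fix l assume "l \<in> int_lattice 1 \<mu>"
    then obtain x y :: int where l: "l = of_int x * 1 + of_int y * \<mu>" by (auto simp: int_lattice_def)
    define l' where "l' = of_int (x div n * t + y) * 1 + of_int (- (x div n)) * \<mu>"
    have "of_int (x mod n) \<in> of_int ` {0..<n}" using n(2) by auto
    moreover have "l' \<in> int_lattice 1 \<mu>" unfolding l'_def int_lattice_def by blast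
    moreover have "of_int (x mod n) + \<mu> * l' = l"
    proof -
      have "of_int (x mod n) + \<mu> * l'
          = of_int (x mod n) + of_int (x div n) * (of_int t * \<mu> - \<mu> * \<mu>) + of_int y * \<mu>"
        by (simp add: l'_def algebra_simps)
      also have "\<dots> = of_int x + of_int y * \<mu>"
      proof -
        have "of_int (x mod n) + of_int (x div n) * of_int n = (of_int x :: complex)"
          by (metis mod_div_mult_eq of_int_add of_int_mult)
        then show ?thesis by (simp add: q)
      qed
      finally show ?thesis by (simp add: l)
    qed
    ultimately show "\<exists>d\<in>of_int ` {0..<n}. \<exists>l'\<in>int_lattice 1 \<mu>. l = d + \<mu> * l'" by (metis (no_types))
  qed
qed

lemma inflationary_tessellation_real:
  fixes L :: "real set"
  assumes lat: "lattice L" and cm: "\<bar>\<mu>\<bar> > 1" and st: "\<forall>x\<in>L. \<mu> * x \<in> L"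
  shows "\<exists>R N T. inflationary_tessellation (\<lambda>z. \<mu> * z) R N T"
proof -
  obtain m where "\<mu> = of_int m"
    using mult_stable_real_lattice_imp_Ints[OF lat st] by (auto elim: Ints_cases)
  moreover have "m \<noteq> 0" using cm calculation by auto
  ultimately show ?thesis using inflationary_tessellation_unit_intervals by blast
qed

lemma inflationary_tessellation_complex:
  fixes L :: "complex set"
  assumes lat: "lattice L" and cm: "cmod \<mu> > 1" and st: "\<forall>x\<in>L. \<mu> * x \<in> L"
  shows "\<exists>R N T. inflationary_tessellation (\<lambda>z. \<mu> * z) R N T"
proof -
  obtain w1 w2 where w: "w1 \<in> L" "w2 \<in> L" and ind: "Im (cnj w1 * w2) \<noteq> 0"
    and L: "L \<subseteq> int_lattice w1 w2"
    using complex_lattice_basis[OF lat] .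
  have "\<mu> * w1 \<in> int_lattice w1 w2" "\<mu> * w2 \<in> int_lattice w1 w2" using w st L by auto
  from lattice_multiplier_cases[OF ind this] show ?thesis
  proof (elim disjE conjE exE)
    assume "\<mu> \<in> \<int>"
    then obtain a where a: "\<mu> = of_int a" by (auto elim: Ints_cases)
    then have "a \<noteq> 0" using cm by auto
    with a obtain D where "finite D" "0 \<in> D" "real (card D) \<le> (cmod \<mu>)^2"
      "digit_set \<mu> D (int_lattice 1 \<i>)" by (rule gaussian_integer_digit_set)
    then show ?thesis using cm by (intro inflationary_tessellation_of_digit_set) auto
  next
    fix t n assume Im: "Im \<mu> \<noteq> 0" and q: "\<mu> * \<mu> = of_int t * \<mu> - of_int n"
      and n: "of_int n = (cmod \<mu>)^2"
    have "n > 0" using n cm by (metis of_int_0_less_iff zero_less_norm_iff zero_less_power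
        order_less_trans zero_less_one)
    with q n obtain D where "finite D" "0 \<in> D" "real (card D) \<le> (cmod \<mu>)^2"
      "digit_set \<mu> D (int_lattice 1 \<mu>)" by (rule quadratic_digit_set)
    then show ?thesis using cm Im by (intro inflationary_tessellation_of_digit_set) auto
  qed
qed

theorem mainTheorem1:
  shows "(\<forall>(L::real set) (\<mu>::real). lattice L \<and> \<mu> \<in> L \<and> \<bar>\<mu>\<bar> > 1 \<and> (\<forall>x\<in>L. \<mu> * x \<in> L)
            \<longrightarrow> (\<exists>R N T. inflationary_tessellation (\<lambda>z. \<mu> * z) R N T))
       \<and> (\<forall>(L::complex set) (\<mu>::complex). lattice L \<and> \<mu> \<in> L \<and> cmod \<mu> > 1 \<and> (\<forall>x\<in>L. \<mu> * x \<in> L)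
            \<longrightarrow> (\<exists>R N T. inflationary_tessellation (\<lambda>z. \<mu> * z) R N T))"
  using inflationary_tessellation_real inflationary_tessellation_complex by blast

end
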